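(* For $\kappa>0$ set $r_0(\kappa)=\sqrt{\kappa+1}-\sqrt{\kappa}$, $$\mu_0(\kappa)=\frac{1+\sqrt{\kappa}-\sqrt{1+\kappa}}{1-\sqrt{\kappa}+\sqrt{1+\kappa}},\qquad t_\kappa(r)=\int_{r_0(\kappa)}^{r}\frac{2\,du}{\sqrt{4\kappa u^2-(1-u^2)^2}}\ \ (r_0(\kappa)\le r<1),$$ and for $z=x+{\rm i}y$ with $x\in\mathbb{R}$, $0<y<1$, set $t_\kappa(x,y)=t_\kappa\big(|g^{-1}(\mu_0(\kappa)z)|\big)$, where $g^{-1}(w)=\frac{{\rm i}-w}{{\rm i}+w}$ (this is defined for all sufficiently small $\kappa$, depending on $(x,y)$). Then for each fixed $(x,y)$, as $\kappa\to0^+$, $$t_\kappa(x,y)=\arccos y+\frac{\kappa}{4}\Big(\frac{x^2y}{\sqrt{1-y^2}}-\arccos y\Big)+o(\kappa).$$ Consequently the graphs $\Phi_\kappa(x,y)=(x,y,t_\kappa(x,y))$ converge to $\Phi_0(x,y)=(x,y,\arccos y)$, which parametrizes half of a parabolic catenoid in $\mathfrak{H}\times\mathbb{R}$, and the normal component of $\frac{d\Phi_\kappa}{d\kappa}\big|_{\kappa=0}$ with respect to the unit normal $\nu=(0,-y^2,-\sqrt{1-y^2})$ is $$w(x,y)=\tfrac14\big(\sqrt{1-y^2}\,\arccos y-x^2y\big).$$ In the parametrization $\widehat F(x,t)=(x,\cos t,t)$, $(x,t)\in\mathbb{R}\times(-\pi/2,\pi/2)$, of the full parabolic catenoid, this Jacobi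 field is $w(x,t)=\frac14(t\sin t-x^2\cos t)$, and it satisfies the Jacobi equation $(\partial_x^2+\partial_t^2+1)w=0$; equivalently, on the parametrization $(x,t)\mapsto(x,\sin t,t)$, $t\in(0,\pi)$, the corresponding Jacobi field is $\frac18\big((\pi-2t)\cos t-2x^2\sin t\big)$.
   Context: $\mathfrak{H}=\{x+{\rm i}y:y>0\}$ with metric $\frac{dx^2+dy^2}{y^2}$ and $\mathbb{D}=\{|z|<1\}$ with metric $\frac{4|dz|^2}{(1-|z|^2)^2}$ are models of $\mathbb{H}^2$, related by the isometry $g(z)={\rm i}\frac{1-z}{1+z}$; $\mathfrak{H}\times\mathbb{R}$ has the product metric with $dt^2$. For each $\kappa>0$, $r\mapsto t_\kappa(r)$, $r\in[r_0(\kappa),1)$, describes (as $t=\pm t_\kappa(|z|)$ over the annulus $r_0\le|z|<1$ in $\mathbb{D}$) the minimal catenoid of revolution in $\mathbb{H}^2\times\mathbb{R}$ with neck radius (Euclidean, in $\mathbb{D}$) $r_0(\kappa)$, and $(x,y)\mapsto(x,y,t_\kappa(x,y))$ is the upper half of the image of this catenoid under $g$ followed by the hyperbolic dilation $z\mapsto z/\mu_0(\kappa)$ of $\mathfrak{H}$. *)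

theory Defs
  imports "HOL-Analysis.Analysis" "HOL-Library.Landau_Symbols"
begin

text \<open>Neck radius r_0(kappa) of the catenoid, in the disk model.\<close>
definition r0 :: "real \<Rightarrow> real" where
  "r0 k = sqrt (k + 1) - sqrt k"

definition mu0 :: "real \<Rightarrow> real" where
  "mu0 k = (1 + sqrt k - sqrt (1 + k)) / (1 - sqrt k + sqrt (1 + k))"

text \<open>Radial profile t_kappa(r) = int_{r_0}^r 2 du / sqrt(4 kappa u^2 - (1-u^2)^2)
  (Henstock-Kurzweil integral, which covers the integrable endpoint singularity at r_0).\<close>
definition t_rad :: "real \<Rightarrow> real \<Rightarrow> real" where
  "t_rad k r = integral {r0 k..r} (\<lambda>u. 2 / sqrt (4 * k * u\<^sup>2 - (1 - u\<^sup>2)\<^sup>2))"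

text \<open>Inverse of the isometry g(z) = i(1-z)/(1+z) from the disk to the half-plane.\<close>
definition ginv :: "complex \<Rightarrow> complex" where
  "ginv w = (\<i> - w) / (\<i> + w)"

definition t_xy :: "real \<Rightarrow> real \<Rightarrow> real \<Rightarrow> real" where
  "t_xy k x y = t_rad k (cmod (ginv (complex_of_real (mu0 k) * Complex x y)))"

definition Phi :: "real \<Rightarrow> real \<Rightarrow> real \<Rightarrow> real \<times> real \<times> real" where
  "Phi k x y = (x, y, if k = 0 then arccos y else t_xy k x y)"

text \<open>Riemannian inner product of H x R (metric (dx^2+dy^2)/y^2 + dt^2) at a point with
  second coordinate y.\<close>
definition hprod :: "real \<Rightarrow> real \<times> real \<times> real \<Rightarrow> real \<times> real \<times> real \<Rightarrow> real" where
  "hprod y v u = (fst v * fst u + fst (snd v) * fst (snd u)) / y\<^sup>2 + snd (snd v) * snd (snd u)"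

definition nu :: "real \<Rightarrow> real \<times> real \<times> real" where
  "nu y = (0, - (y\<^sup>2), - sqrt (1 - y\<^sup>2))"

definition wJ :: "real \<Rightarrow> real \<Rightarrow> real" where
  "wJ x y = (1/4) * (sqrt (1 - y\<^sup>2) * arccos y - x\<^sup>2 * y)"

definition wF :: "real \<Rightarrow> real \<Rightarrow> real" where
  "wF x t = (1/4) * (t * sin t - x\<^sup>2 * cos t)"

definition wS :: "real \<Rightarrow> real \<Rightarrow> real" where
  "wS x t = (1/8) * ((pi - 2 * t) * cos t - 2 * x\<^sup>2 * sin t)"

end

theory Submission
  imports Defs
begin

text \<open>The substitution \<open>cos \<theta> = (1 - u\<^sup>2) / (2 \<surd>\<kappa> u)\<close> turns \<open>t\<^sub>\<kappa>(r)\<close> into the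
  elliptic integral \<open>\<integral>\<^sub>0\<^sup>\<Theta> d\<theta> / \<surd>(1 + \<kappa> cos\<^sup>2 \<theta>)\<close>, whose integrand is
  \<open>1 - (\<kappa>/2) cos\<^sup>2 \<theta> + O(\<kappa>\<^sup>2)\<close> uniformly in \<open>\<theta>\<close>; hence
  \<open>t\<^sub>\<kappa>(r) = \<Theta> - (\<kappa>/4)(\<Theta> + sin \<Theta> cos \<Theta>) + O(\<kappa>\<^sup>2)\<close>. For \<open>r = |g\<^sup>-\<^sup>1(\<mu>\<^sub>0(\<kappa>) z)|\<close>
  the endpoint satisfies \<open>cos \<Theta> = 2 m y / \<surd>P\<close> with \<open>m = 1/(1 + \<surd>(1 + \<kappa>))\<close> and \<open>P\<close>
  polynomial in \<open>\<kappa>\<close> and \<open>m\<close>, a function smooth at \<open>\<kappa> = 0\<close> with value \<open>y\<close>; differentiating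
  gives the first order term.\<close>

lemma has_real_derivative_at_right_if_close:
  fixes f g :: "real \<Rightarrow> real"
  assumes f: "(f has_real_derivative D) (at a)" and "g a = f a"
    and close: "\<forall>\<^sub>F k in at_right a. \<bar>g k - f k\<bar> \<le> C * (k - a)\<^sup>2"
  shows "(g has_real_derivative D) (at a within {a..})"
proof -
  have "((\<lambda>k. (f k - f a) / (k - a)) \<longlongrightarrow> D) (at_right a)"
    using f unfolding has_field_derivative_iff by (rule tendsto_mono[OF at_le[OF subset_UNIV]])
  moreover have "((\<lambda>k. (g k - f k) / (k - a)) \<longlongrightarrow> 0) (at_right a)"
  proof (rule Lim_null_comparison)
    show "\<forall>\<^sub>F k in at_right a. norm ((g k - f k) / (k - a)) \<le> C * (k - a)"
      using close eventually_at_right_less[of a]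
      by eventually_elim (simp add: abs_divide divide_le_eq power2_eq_square mult.assoc)
    have "((\<lambda>k. C * (k - a)) \<longlongrightarrow> C * (a - a)) (at_right a)"
      by (intro tendsto_intros)
    then show "((\<lambda>k. C * (k - a)) \<longlongrightarrow> 0) (at_right a)" by simp
  qed
  ultimately have "((\<lambda>k. (f k - f a) / (k - a) + (g k - f k) / (k - a)) \<longlongrightarrow> D + 0) (at_right a)"
    by (rule tendsto_add)
  then have "((\<lambda>k. (g k - g a) / (k - a)) \<longlongrightarrow> D) (at_right a)"
    using assms(2) by (simp add: add_divide_distrib[symmetric])
  then show ?thesis
    unfolding has_field_derivative_iff at_within_Ici_at_right .
qed

lemma smallo_at_right_if_has_real_derivative:
  fixes g :: "real \<Rightarrow> real"
  assumes "(g has_real_derivative D) (at a within {a..})"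
  shows "(\<lambda>k. g k - (g a + (k - a) * D)) \<in> o[at_right a](\<lambda>k. k - a)"
proof (rule smalloI_tendsto)
  have "((\<lambda>k. (g k - g a) / (k - a) - D) \<longlongrightarrow> D - D) (at_right a)"
    using assms unfolding has_field_derivative_iff at_within_Ici_at_right
    by (intro tendsto_diff tendsto_const)
  moreover have "\<forall>\<^sub>F k in at_right a. (g k - g a) / (k - a) - D = (g k - (g a + (k - a) * D)) / (k - a)"
    using eventually_at_right_less[of a] by eventually_elim (simp add: field_simps)
  ultimately show "((\<lambda>k. (g k - (g a + (k - a) * D)) / (k - a)) \<longlongrightarrow> 0) (at_right a)"
    by (simp add: tendsto_cong)
  show "\<forall>\<^sub>F k in at_right a. k - a \<noteq> 0"
    using eventually_at_right_less[of a] by eventually_elim simp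
qed

lemma inverse_sqrt_one_plus_bounds:
  fixes a :: real
  assumes "0 \<le> a"
  shows "0 \<le> 1 / sqrt (1 + a) - 1 + a / 2" "1 / sqrt (1 + a) - 1 + a / 2 \<le> a\<^sup>2"
proof -
  define q where "q = sqrt (1 + a)"
  have q1: "1 \<le> q" unfolding q_def using assms by simp
  have a_eq: "a = q\<^sup>2 - 1" unfolding q_def using assms by simp
  have eq: "1 / sqrt (1 + a) - 1 + a / 2 = (q - 1)\<^sup>2 * ((q + 2) / (2 * q))"
    unfolding q_def[symmetric] a_eq using q1 by (simp add: field_simps power2_eq_square)
  show "0 \<le> 1 / sqrt (1 + a) - 1 + a / 2" unfolding eq using q1 by simp
  have "4 \<le> (q + 1)\<^sup>2"
    using q1 power_mono[of 2 "q + 1" 2] by simp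
  then have "q + 2 \<le> 2 * q * (q + 1)\<^sup>2"
    using q1 mult_left_mono[of 4 "(q + 1)\<^sup>2" "2 * q"] by linarith
  then have "(q + 2) / (2 * q) \<le> (q + 1)\<^sup>2"
    using q1 by (simp add: divide_le_eq mult.commute)
  then have "(q - 1)\<^sup>2 * ((q + 2) / (2 * q)) \<le> (q - 1)\<^sup>2 * (q + 1)\<^sup>2"
    by (intro mult_left_mono) auto
  also have "\<dots> = a\<^sup>2" unfolding a_eq by (simp add: power2_eq_square algebra_simps)
  finally show "1 / sqrt (1 + a) - 1 + a / 2 \<le> a\<^sup>2" unfolding eq .
qed

lemma cos_squared_has_integral:
  fixes p :: real
  assumes "0 \<le> p"
  shows "((\<lambda>\<theta>. (cos \<theta>)\<^sup>2) has_integral (p + sin p * cos p) / 2) {0..p}"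
proof -
  have "((\<lambda>\<theta>. (\<theta> + sin \<theta> * cos \<theta>) / 2) has_real_derivative (cos t)\<^sup>2) (at t)" for t :: real
    by (rule derivative_eq_intros refl)+ (simp add: algebra_simps power2_eq_square, use sin_cos_squared_add3[of t] in algebra)
  then show ?thesis
    using fundamental_theorem_of_calculus[OF assms, of "\<lambda>\<theta>. (\<theta> + sin \<theta> * cos \<theta>) / 2"]
    by (simp add: has_real_derivative_iff_has_vector_derivative has_vector_derivative_at_within)
qed

lemma mult_sin_nonneg:
  fixes t :: real
  assumes "\<bar>t\<bar> \<le> pi"
  shows "0 \<le> t * sin t"
proof (cases "0 \<le> t")
  case True
  then show ?thesis using assms by (simp add: sin_ge_zero)
next
  case False
  then have "0 \<le> sin (- t)" using assms by (intro sin_ge_zero) auto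
  then show ?thesis using False by (simp add: mult_nonpos_nonpos)
qed

lemma arccos_cos_abs: "\<bar>t\<bar> \<le> pi \<Longrightarrow> arccos (cos t) = \<bar>t\<bar>"
  by (metis abs_ge_zero abs_of_nonneg abs_of_nonpos arccos_cos cos_minus linorder_le_cases)

section \<open>The radial profile as an elliptic integral\<close>

lemma r0_pos: "0 \<le> k \<Longrightarrow> 0 < r0 k"
  unfolding r0_def by (simp add: real_sqrt_less_iff)

lemma r0_factorization:
  assumes "0 \<le> k"
  shows "u\<^sup>2 + 2 * sqrt k * u - 1 = (u - r0 k) * (u + sqrt k + sqrt (k + 1))"
proof -
  have "(sqrt (k + 1))\<^sup>2 = k + 1" "(sqrt k)\<^sup>2 = k" using assms by auto
  then show ?thesis unfolding r0_def by (simp add: algebra_simps power2_eq_square)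
qed

definition subst_cos :: "real \<Rightarrow> real \<Rightarrow> real" where
  "subst_cos k u = (1 - u\<^sup>2) / (2 * sqrt k * u)"

lemma subst_cos_r0: "0 < k \<Longrightarrow> subst_cos k (r0 k) = 1"
  using r0_factorization[of k "r0 k"] r0_pos[of k] unfolding subst_cos_def by (simp add: field_simps)

lemma subst_cos_less_one_iff:
  assumes "0 < k" "0 < u"
  shows "subst_cos k u < 1 \<longleftrightarrow> r0 k < u"
proof -
  have pos: "0 < u + sqrt k + sqrt (k + 1)"
    using assms by (simp add: add_pos_nonneg)
  have "subst_cos k u < 1 \<longleftrightarrow> 0 < u\<^sup>2 + 2 * sqrt k * u - 1"
    unfolding subst_cos_def using assms by (simp add: divide_less_eq) linarith
  also have "\<dots> \<longleftrightarrow> r0 k < u"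
    unfolding r0_factorization[OF less_imp_le[OF assms(1)]] using pos by (simp add: zero_less_mult_iff)
  finally show ?thesis .
qed

lemma subst_cos_pos: "0 < k \<Longrightarrow> 0 < u \<Longrightarrow> u < 1 \<Longrightarrow> 0 < subst_cos k u"
  unfolding subst_cos_def by (simp add: abs_square_less_1)

lemma subst_cos_has_real_derivative:
  assumes "0 < k" "0 < u"
  shows "(subst_cos k has_real_derivative - (1 + u\<^sup>2) / (2 * sqrt k * u\<^sup>2)) (at u)"
  unfolding subst_cos_def[abs_def]
  by (rule derivative_eq_intros refl)+ (use assms in \<open>auto simp: field_simps power2_eq_square\<close>)

definition ellint :: "real \<Rightarrow> real \<Rightarrow> real" where
  "ellint k p = integral {0..p} (\<lambda>\<theta>. 1 / sqrt (1 + k * (cos \<theta>)\<^sup>2))"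

lemma continuous_on_ellint_integrand:
  assumes "0 \<le> k"
  shows "continuous_on S (\<lambda>\<theta>. 1 / sqrt (1 + k * (cos \<theta>)\<^sup>2))"
proof -
  have "0 < 1 + k * (cos \<theta>)\<^sup>2" for \<theta>
    using assms by (simp add: add_pos_nonneg)
  then show ?thesis by (intro continuous_intros) (auto simp: less_imp_neq[symmetric])
qed

lemma ellint_has_vector_derivative:
  assumes "0 \<le> k" "p \<in> {0..pi}"
  shows "(ellint k has_vector_derivative 1 / sqrt (1 + k * (cos p)\<^sup>2)) (at p within {0..pi})"
  unfolding ellint_def[abs_def]
  by (rule integral_has_vector_derivative[OF continuous_on_ellint_integrand[OF assms(1)] assms(2)])

lemma ellint_has_real_derivative:
  assumes "0 \<le> k" "0 < p" "p < pi"
  shows "(ellint k has_real_derivative 1 / sqrt (1 + k * (cos p)\<^sup>2)) (at p)"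
proof -
  have "at p within {0..pi} = at p"
    using assms by (intro at_within_interior) auto
  then show ?thesis
    using ellint_has_vector_derivative[of k p] assms
    by (simp add: has_real_derivative_iff_has_vector_derivative)
qed

lemma continuous_on_ellint: "0 \<le> k \<Longrightarrow> continuous_on {0..pi} (ellint k)"
  unfolding continuous_on_eq_continuous_within
  using ellint_has_vector_derivative has_vector_derivative_continuous by blast

lemma ellint_arccos_subst_cos_has_real_derivative:
  assumes k: "0 < k" and u: "r0 k < u" "u < 1"
  shows "((\<lambda>u. ellint k (arccos (subst_cos k u))) has_real_derivative
           2 / sqrt (4 * k * u\<^sup>2 - (1 - u\<^sup>2)\<^sup>2)) (at u)"
proof -
  let ?s = "subst_cos k u"
  have u0: "0 < u" using u r0_pos[of k] k by auto
  have s0: "0 < ?s" "?s < 1" using subst_cos_pos subst_cos_less_one_iff k u u0 by auto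
  have "0 < arccos ?s" "arccos ?s < pi"
    using arccos_lt_bounded[of ?s] s0 by auto
  then have chain: "((\<lambda>u. ellint k (arccos (subst_cos k u))) has_real_derivative
      1 / sqrt (1 + k * ?s\<^sup>2) * (inverse (- sqrt (1 - ?s\<^sup>2)) * (- (1 + u\<^sup>2) / (2 * sqrt k * u\<^sup>2)))) (at u)"
    using DERIV_chain2[OF ellint_has_real_derivative
        DERIV_chain2[OF DERIV_arccos subst_cos_has_real_derivative]] k u0 s0
    by (simp add: cos_arccos)
  have sk: "sqrt k * (sqrt k * c) = k * c" for c
    using k by (simp add: mult.assoc[symmetric])
  have "1 + k * ?s\<^sup>2 = ((1 + u\<^sup>2) / (2 * u))\<^sup>2"
    unfolding subst_cos_def using u0 k by (simp add: field_simps power2_eq_square sk)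
  then have plus: "sqrt (1 + k * ?s\<^sup>2) = (1 + u\<^sup>2) / (2 * u)"
    using u0 by simp
  have minus_eq: "1 - ?s\<^sup>2 = (4 * k * u\<^sup>2 - (1 - u\<^sup>2)\<^sup>2) / (2 * sqrt k * u)\<^sup>2"
    unfolding subst_cos_def using u0 k by (simp add: field_simps power2_eq_square)
  have "0 < 1 - ?s\<^sup>2" using s0 by (simp add: abs_square_less_1)
  then have disc: "0 < 4 * k * u\<^sup>2 - (1 - u\<^sup>2)\<^sup>2"
    using minus_eq u0 k by (simp add: zero_less_divide_iff)
  have minus: "sqrt (1 - ?s\<^sup>2) = sqrt (4 * k * u\<^sup>2 - (1 - u\<^sup>2)\<^sup>2) / (2 * sqrt k * u)"
    using minus_eq u0 k by (simp add: real_sqrt_divide)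
  have "1 / sqrt (1 + k * ?s\<^sup>2) * (inverse (- sqrt (1 - ?s\<^sup>2)) * (- (1 + u\<^sup>2) / (2 * sqrt k * u\<^sup>2)))
      = 2 / sqrt (4 * k * u\<^sup>2 - (1 - u\<^sup>2)\<^sup>2)"
  proof -
    have field_identity:
      "1 / (A / (2 * w)) * (inverse (- (B / (2 * c * w))) * (- A / (2 * c * w\<^sup>2))) = 2 / B"
      if "0 < A" "0 < B" "0 < c" "0 < w" for A B c w :: real
      using that by (simp add: field_simps power2_eq_square)
    show ?thesis
      unfolding plus minus
      by (rule field_identity) (use u0 k disc in \<open>auto simp: add_pos_nonneg\<close>)
  qed
  with chain show ?thesis by simp
qed

lemma t_rad_eq_ellint:
  assumes k: "0 < k" and r: "r0 k \<le> r" "r < 1"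
  shows "t_rad k r = ellint k (arccos (subst_cos k r))"
proof -
  have subst_cos_range: "subst_cos k u \<in> {-1..1}" if "u \<in> {r0 k..r}" for u
    using that subst_cos_r0[OF k] subst_cos_pos[OF k, of u] subst_cos_less_one_iff[OF k, of u] r0_pos[of k] k r
    by (cases "u = r0 k") auto
  have "continuous_on {r0 k..r} (subst_cos k)"
    unfolding subst_cos_def using r0_pos[of k] k by (intro continuous_intros) auto
  then have "continuous_on {r0 k..r} (\<lambda>u. arccos (subst_cos k u))"
    by (rule continuous_on_compose2[OF continuous_on_arccos']) (use subst_cos_range in fastforce)
  then have cont: "continuous_on {r0 k..r} (\<lambda>u. ellint k (arccos (subst_cos k u)))"
    by (rule continuous_on_compose2[OF continuous_on_ellint[OF less_imp_le[OF k]]])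
      (use subst_cos_range in \<open>auto intro!: arccos_lbound arccos_ubound\<close>)
  have "((\<lambda>u. 2 / sqrt (4 * k * u\<^sup>2 - (1 - u\<^sup>2)\<^sup>2)) has_integral
          ellint k (arccos (subst_cos k r)) - ellint k (arccos (subst_cos k (r0 k)))) {r0 k..r}"
    using r ellint_arccos_subst_cos_has_real_derivative[OF k]
    by (intro fundamental_theorem_of_calculus_interior[OF r(1) cont])
      (auto simp: has_real_derivative_iff_has_vector_derivative)
  moreover have "ellint k (arccos (subst_cos k (r0 k))) = 0"
    unfolding subst_cos_r0[OF k] ellint_def by simp
  ultimately show ?thesis
    unfolding t_rad_def by (simp add: integral_unique)
qed

lemma ellint_expansion:
  assumes k: "0 \<le> k" "k \<le> 1" and p: "0 \<le> p"
  shows "\<bar>ellint k p - (p - k / 4 * (p + sin p * cos p))\<bar> \<le> k\<^sup>2 * p"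
proof -
  define h where "h \<theta> = 1 / sqrt (1 + k * (cos \<theta>)\<^sup>2) - 1 + k / 2 * (cos \<theta>)\<^sup>2" for \<theta>
  have "((\<lambda>\<theta>. 1 / sqrt (1 + k * (cos \<theta>)\<^sup>2)) has_integral ellint k p) {0..p}"
    unfolding ellint_def
    by (rule integrable_integral integrable_continuous_real continuous_on_ellint_integrand k)+
  moreover have "((\<lambda>\<theta>. 1::real) has_integral p) {0..p}"
    using has_integral_const_real[of "1::real" 0 p] p by simp
  moreover have "((\<lambda>\<theta>. k / 2 * (cos \<theta>)\<^sup>2) has_integral k / 2 * ((p + sin p * cos p) / 2)) {0..p}"
    by (rule has_integral_mult_right[OF cos_squared_has_integral[OF p]])
  ultimately have "(h has_integral (ellint k p - p + k / 2 * ((p + sin p * cos p) / 2))) {0..p}"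
    unfolding h_def by (intro has_integral_add has_integral_diff)
  also have "ellint k p - p + k / 2 * ((p + sin p * cos p) / 2)
      = ellint k p - (p - k / 4 * (p + sin p * cos p))"
    by (simp add: field_simps)
  finally have h_integral:
    "(h has_integral (ellint k p - (p - k / 4 * (p + sin p * cos p)))) {0..p}" .
  have h_bounds: "0 \<le> h \<theta> \<and> h \<theta> \<le> k\<^sup>2" for \<theta>
  proof -
    have c: "0 \<le> (cos \<theta>)\<^sup>2" "(cos \<theta>)\<^sup>2 \<le> 1" by (auto simp: abs_square_le_1)
    then have "0 \<le> k * (cos \<theta>)\<^sup>2" "k * (cos \<theta>)\<^sup>2 \<le> k"
      using k mult_left_mono[of "(cos \<theta>)\<^sup>2" 1 k] by auto
    then have "(k * (cos \<theta>)\<^sup>2)\<^sup>2 \<le> k\<^sup>2" by (simp add: power_mono)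
    then show ?thesis
      using inverse_sqrt_one_plus_bounds[OF \<open>0 \<le> k * (cos \<theta>)\<^sup>2\<close>] unfolding h_def by simp
  qed
  have "0 \<le> ellint k p - (p - k / 4 * (p + sin p * cos p))"
    by (rule has_integral_nonneg[OF h_integral]) (use h_bounds in auto)
  moreover have "ellint k p - (p - k / 4 * (p + sin p * cos p)) \<le> k\<^sup>2 * p"
    using has_integral_le[OF h_integral has_integral_const_real[of "k\<^sup>2" 0 p]] h_bounds p
    by (simp add: mult.commute)
  ultimately show ?thesis by linarith
qed

section \<open>The endpoint of the integral in the half-plane model\<close>

text \<open>\<open>mu0 k = sqrt k * mu0_factor k\<close>, and unlike \<open>mu0\<close> the factor is smooth at \<open>0\<close>.\<close>
definition mu0_factor :: "real \<Rightarrow> real" where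
  "mu0_factor k = 1 / (1 + sqrt (1 + k))"

text \<open>For \<open>w = mu0 k * (x + \<i> y)\<close>, \<open>P_xy x y k = |\<i> - w|\<^sup>2 |\<i> + w|\<^sup>2\<close> and
  \<open>S_xy x y k = subst_cos k |ginv w|\<close>.\<close>
definition P_xy :: "real \<Rightarrow> real \<Rightarrow> real \<Rightarrow> real" where
  "P_xy x y k = (1 + k * (mu0_factor k)\<^sup>2 * (x\<^sup>2 + y\<^sup>2))\<^sup>2 - 4 * k * (mu0_factor k)\<^sup>2 * y\<^sup>2"

definition S_xy :: "real \<Rightarrow> real \<Rightarrow> real \<Rightarrow> real" where
  "S_xy x y k = 2 * mu0_factor k * y / sqrt (P_xy x y k)"

lemma mu0_factor_pos: "0 \<le> k \<Longrightarrow> 0 < mu0_factor k"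
  unfolding mu0_factor_def by (simp add: add_pos_nonneg)

lemma mu0_eq:
  assumes "0 \<le> k"
  shows "mu0 k = sqrt k * mu0_factor k"
proof -
  have sqrt_less: "sqrt k < sqrt (1 + k)" using assms by simp
  have "(sqrt (1 + k))\<^sup>2 = 1 + k" "(sqrt k)\<^sup>2 = k" using assms by auto
  then have "(1 + sqrt k - sqrt (1 + k)) * (1 + sqrt (1 + k)) = sqrt k * (1 - sqrt k + sqrt (1 + k))"
    by (simp add: algebra_simps power2_eq_square)
  moreover have "0 < 1 - sqrt k + sqrt (1 + k)" "0 < 1 + sqrt (1 + k)"
    using sqrt_less assms by (linarith, simp add: add_pos_nonneg)
  ultimately show ?thesis
    unfolding mu0_def mu0_factor_def by (simp add: field_simps)
qed

lemma norm_ginv_mu0: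
  assumes k: "0 < k" and y: "0 < y" and P: "0 < P_xy x y k"
  defines "\<rho> \<equiv> cmod (ginv (complex_of_real (mu0 k) * Complex x y))"
  shows "0 < \<rho>" "\<rho> < 1" "subst_cos k \<rho> = S_xy x y k"
proof -
  define m where "m = mu0_factor k"
  define \<mu> where "\<mu> = sqrt k * m"
  have m0: "0 < m" unfolding m_def using mu0_factor_pos k by simp
  have mu_pos: "0 < \<mu>" unfolding \<mu>_def using m0 k by simp
  define N where "N = (\<mu> * x)\<^sup>2 + (1 - \<mu> * y)\<^sup>2"
  define M where "M = (\<mu> * x)\<^sup>2 + (1 + \<mu> * y)\<^sup>2"
  have "complex_of_real (mu0 k) * Complex x y = Complex (\<mu> * x) (\<mu> * y)"
    unfolding \<mu>_def m_def mu0_eq[OF less_imp_le[OF k]] by (simp add: complex_eq_iff)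
  moreover have "cmod (\<i> - Complex a b) = sqrt (a\<^sup>2 + (1 - b)\<^sup>2)"
    and "cmod (\<i> + Complex a b) = sqrt (a\<^sup>2 + (1 + b)\<^sup>2)" for a b
    unfolding cmod_def by (simp_all add: power2_eq_square algebra_simps)
  ultimately have rho: "\<rho> = sqrt N / sqrt M"
    unfolding \<rho>_def ginv_def norm_divide N_def M_def by simp
  have "0 < 1 + \<mu> * y" using mult_pos_pos[OF mu_pos y] by linarith
  then have M_pos: "0 < M" unfolding M_def by (intro add_nonneg_pos) auto
  have "N * M = (1 + \<mu>\<^sup>2 * (x\<^sup>2 + y\<^sup>2))\<^sup>2 - 4 * \<mu>\<^sup>2 * y\<^sup>2"
    unfolding N_def M_def by (simp add: power2_eq_square algebra_simps)
  also have "\<dots> = P_xy x y k"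
    unfolding P_xy_def \<mu>_def m_def using k by (simp add: power_mult_distrib mult.assoc)
  finally have NM: "N * M = P_xy x y k" .
  have N_pos: "0 < N" using NM P M_pos by (metis zero_less_mult_pos2)
  show "0 < \<rho>" unfolding rho using N_pos M_pos by simp
  have "N < M" unfolding N_def M_def using mu_pos y by (simp add: power2_eq_square algebra_simps)
  then show "\<rho> < 1" unfolding rho using N_pos M_pos by simp
  have "(1 - (a / b)\<^sup>2) / (2 * c * (a / b)) = (b\<^sup>2 - a\<^sup>2) / (2 * c * a * b)"
    if "0 < a" "0 < b" "0 < c" for a b c :: real
    using that by (simp add: field_simps power2_eq_square)
  then have "subst_cos k \<rho> = ((sqrt M)\<^sup>2 - (sqrt N)\<^sup>2) / (2 * sqrt k * sqrt N * sqrt M)"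
    unfolding subst_cos_def rho using N_pos M_pos k by simp
  also have "(sqrt M)\<^sup>2 - (sqrt N)\<^sup>2 = M - N" using N_pos M_pos by simp
  also have "M - N = 4 * \<mu> * y" unfolding N_def M_def by (simp add: power2_eq_square algebra_simps)
  also have "4 * \<mu> * y / (2 * sqrt k * sqrt N * sqrt M) = 2 * m * y / (sqrt N * sqrt M)"
    unfolding \<mu>_def using k by (simp add: field_simps)
  also have "sqrt N * sqrt M = sqrt (P_xy x y k)" unfolding NM[symmetric] by (simp add: real_sqrt_mult)
  finally show "subst_cos k \<rho> = S_xy x y k"
    unfolding S_xy_def m_def .
qed

lemma mu0_factor_0: "mu0_factor 0 = 1/2"
  unfolding mu0_factor_def by simp

lemma P_xy_0: "P_xy x y 0 = 1"
  unfolding P_xy_def by simp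

lemma S_xy_0: "S_xy x y 0 = y"
  unfolding S_xy_def P_xy_0 mu0_factor_0 by simp

lemma mu0_factor_has_real_derivative_0: "(mu0_factor has_real_derivative -1/8) (at 0)"
proof -
  have sqrt_deriv: "((\<lambda>k. sqrt (1 + k)) has_real_derivative inverse (sqrt (1 + 0)) / 2 * (0 + 1)) (at 0)"
    by (rule DERIV_chain2[OF DERIV_real_sqrt]) (auto intro!: derivative_eq_intros)
  show ?thesis
    unfolding mu0_factor_def[abs_def] by (rule sqrt_deriv derivative_eq_intros refl)+ simp_all
qed

lemma P_xy_has_real_derivative_0: "(P_xy x y has_real_derivative (x\<^sup>2 - y\<^sup>2) / 2) (at 0)"
  unfolding P_xy_def[abs_def]
  by (rule derivative_eq_intros mu0_factor_has_real_derivative_0 refl)+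
    (simp add: mu0_factor_0 power2_eq_square algebra_simps)

lemma S_xy_has_real_derivative_0: "(S_xy x y has_real_derivative - y * (1 + x\<^sup>2 - y\<^sup>2) / 4) (at 0)"
proof -
  have sqrt_deriv: "((\<lambda>k. sqrt (P_xy x y k)) has_real_derivative
      inverse (sqrt (P_xy x y 0)) / 2 * ((x\<^sup>2 - y\<^sup>2) / 2)) (at 0)"
    by (rule DERIV_chain2[OF DERIV_real_sqrt P_xy_has_real_derivative_0]) (simp add: P_xy_0)
  show ?thesis
    unfolding S_xy_def[abs_def]
    by (rule sqrt_deriv mu0_factor_has_real_derivative_0 derivative_eq_intros refl)+
      (simp_all add: mu0_factor_0 P_xy_0 field_simps)
qed

lemma eventually_S_xy_bounds:
  assumes "0 < y" "y < 1"
  shows "\<forall>\<^sub>F k in at_right 0. 0 < k \<and> k < 1 \<and> 0 < P_xy x y k \<and> 0 < S_xy x y k \<and> S_xy x y k < 1"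
proof -
  have P_lim: "(P_xy x y \<longlongrightarrow> 1) (at_right 0)"
    using DERIV_isCont[OF P_xy_has_real_derivative_0] unfolding isCont_def P_xy_0
    by (rule tendsto_mono[OF at_le[OF subset_UNIV]])
  have S_lim: "(S_xy x y \<longlongrightarrow> y) (at_right 0)"
    using DERIV_isCont[OF S_xy_has_real_derivative_0] unfolding isCont_def S_xy_0
    by (rule tendsto_mono[OF at_le[OF subset_UNIV]])
  have "\<forall>\<^sub>F k in at_right 0. k \<in> {0<..<(1::real)}"
    by (rule eventually_at_right_real) simp
  then show ?thesis
    using order_tendstoD(1)[OF S_lim assms(1)] order_tendstoD(2)[OF S_lim assms(2)]
      order_tendstoD(1)[OF P_lim zero_less_one]
    by eventually_elim auto
qed

lemma t_xy_eq_ellint: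
  assumes k: "0 < k" and y: "0 < y" and P: "0 < P_xy x y k" and S: "S_xy x y k < 1"
  defines "\<rho> \<equiv> cmod (ginv (complex_of_real (mu0 k) * Complex x y))"
  shows "r0 k \<le> \<rho>" "\<rho> < 1" "t_xy k x y = ellint k (arccos (S_xy x y k))"
proof -
  note \<rho> = norm_ginv_mu0[OF k y P, folded \<rho>_def]
  have "r0 k < \<rho>"
    using subst_cos_less_one_iff[OF k \<rho>(1)] \<rho>(3) S by simp
  then show r0: "r0 k \<le> \<rho>" by simp
  show "\<rho> < 1" using \<rho> by simp
  show "t_xy k x y = ellint k (arccos (S_xy x y k))"
    unfolding t_xy_def \<rho>_def[symmetric] t_rad_eq_ellint[OF k r0 \<rho>(2)] \<rho>(3) ..
qed

lemma eventually_norm_ginv_mu0_bounds: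
  assumes "0 < y" "y < 1"
  shows "\<forall>\<^sub>F k in at_right 0. r0 k \<le> cmod (ginv (complex_of_real (mu0 k) * Complex x y))
           \<and> cmod (ginv (complex_of_real (mu0 k) * Complex x y)) < 1"
  using eventually_S_xy_bounds[OF assms, of x]
proof eventually_elim
  case (elim k)
  then have "0 < k" "0 < P_xy x y k" "S_xy x y k < 1" by auto
  from t_xy_eq_ellint(1,2)[OF this(1) assms(1) this(2,3)] show ?case ..
qed

section \<open>First order expansion in \<open>\<kappa>\<close>\<close>

lemma leading_terms_has_real_derivative_0:
  fixes x y :: real
  assumes "0 < y" "y < 1"
  defines "\<Theta> \<equiv> \<lambda>k. arccos (S_xy x y k)"
  shows "((\<lambda>k. \<Theta> k - k / 4 * (\<Theta> k + sin (\<Theta> k) * cos (\<Theta> k))) has_real_derivative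
           1/4 * (x\<^sup>2 * y / sqrt (1 - y\<^sup>2) - arccos y)) (at 0)"
proof -
  have sqrt_pos: "0 < sqrt (1 - y\<^sup>2)"
    using assms by (simp add: abs_square_less_1)
  have deriv: "((\<lambda>k. \<Theta> k - k / 4 * (\<Theta> k + sin (\<Theta> k) * cos (\<Theta> k))) has_real_derivative
      inverse (- sqrt (1 - y\<^sup>2)) * (- y * (1 + x\<^sup>2 - y\<^sup>2) / 4)
      - 1/4 * (arccos y + sqrt (1 - y\<^sup>2) * y)) (at 0)"
    unfolding \<Theta>_def using assms
    by (auto intro!: derivative_eq_intros S_xy_has_real_derivative_0
        simp: S_xy_0 sin_arccos cos_arccos)
  have "inverse (- s) * (- y * (1 + x\<^sup>2 - y\<^sup>2) / 4) - 1/4 * (a + s * y)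
      = 1/4 * (x\<^sup>2 * y / s - a)" if "0 < s" "y\<^sup>2 = 1 - s\<^sup>2" for s a
    unfolding that(2) using that(1) by (simp add: field_simps power2_eq_square)
  moreover have "y\<^sup>2 = 1 - (sqrt (1 - y\<^sup>2))\<^sup>2"
    using sqrt_pos by simp
  ultimately have derivative_value: "inverse (- sqrt (1 - y\<^sup>2)) * (- y * (1 + x\<^sup>2 - y\<^sup>2) / 4)
      - 1/4 * (arccos y + sqrt (1 - y\<^sup>2) * y) = 1/4 * (x\<^sup>2 * y / sqrt (1 - y\<^sup>2) - arccos y)"
    using sqrt_pos by blast
  show ?thesis
    using deriv unfolding derivative_value .
qed

lemma t_xy_has_right_derivative_0:
  assumes "0 < y" "y < 1"
  shows "((\<lambda>k. if k = 0 then arccos y else t_xy k x y) has_real_derivative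
           1/4 * (x\<^sup>2 * y / sqrt (1 - y\<^sup>2) - arccos y)) (at 0 within {0..})"
proof (rule has_real_derivative_at_right_if_close[where C = pi,
      OF leading_terms_has_real_derivative_0[OF assms]])
  show "\<forall>\<^sub>F k in at_right 0.
      \<bar>(if k = 0 then arccos y else t_xy k x y)
       - (arccos (S_xy x y k) - k / 4 * (arccos (S_xy x y k)
          + sin (arccos (S_xy x y k)) * cos (arccos (S_xy x y k))))\<bar> \<le> pi * (k - 0)\<^sup>2"
    using eventually_S_xy_bounds[OF assms, of x]
  proof eventually_elim
    case (elim k)
    let ?\<Theta> = "arccos (S_xy x y k)"
    have "0 \<le> ?\<Theta>" "?\<Theta> \<le> pi"
      using elim by (auto intro!: arccos_lbound arccos_ubound)
    moreover have "t_xy k x y = ellint k ?\<Theta>"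
      using elim t_xy_eq_ellint(3)[OF _ assms(1)] by auto
    moreover have "\<bar>ellint k ?\<Theta> - (?\<Theta> - k / 4 * (?\<Theta> + sin ?\<Theta> * cos ?\<Theta>))\<bar> \<le> k\<^sup>2 * ?\<Theta>"
      using elim \<open>0 \<le> ?\<Theta>\<close> by (intro ellint_expansion) auto
    moreover have "k\<^sup>2 * ?\<Theta> \<le> k\<^sup>2 * pi"
      using \<open>?\<Theta> \<le> pi\<close> by (simp add: mult_left_mono)
    ultimately have "\<bar>t_xy k x y - (?\<Theta> - k / 4 * (?\<Theta> + sin ?\<Theta> * cos ?\<Theta>))\<bar> \<le> k\<^sup>2 * pi"
      by linarith
    then show ?case using elim by (simp add: mult.commute)
  qed
qed (simp add: S_xy_0)

lemma t_xy_expansion: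
  assumes "0 < y" "y < 1"
  shows "(\<lambda>k. t_xy k x y - (arccos y + k / 4 * (x\<^sup>2 * y / sqrt (1 - y\<^sup>2) - arccos y)))
           \<in> o[at_right 0](\<lambda>k. k)"
proof -
  define D where "D = 1/4 * (x\<^sup>2 * y / sqrt (1 - y\<^sup>2) - arccos y)"
  define g where "g k = (if k = 0 then arccos y else t_xy k x y)" for k
  have "(g has_real_derivative D) (at 0 within {0..})"
    unfolding g_def[abs_def] D_def by (rule t_xy_has_right_derivative_0[OF assms])
  from smallo_at_right_if_has_real_derivative[OF this]
  have "(\<lambda>k. g k - (g 0 + k * D)) \<in> o[at_right 0](\<lambda>k. k)"
    by (simp only: diff_zero)
  moreover have "\<forall>\<^sub>F k in at_right 0. g k - (g 0 + k * D)
      = t_xy k x y - (arccos y + k / 4 * (x\<^sup>2 * y / sqrt (1 - y\<^sup>2) - arccos y))"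
    using eventually_at_right_less[of 0] by eventually_elim (simp add: g_def D_def)
  ultimately show ?thesis
    by (rule landau_o.small.in_cong[THEN iffD1, rotated])
qed

lemma Phi_has_vector_derivative_0:
  assumes "0 < y" "y < 1"
  shows "((\<lambda>k. Phi k x y) has_vector_derivative (0, 0, 1/4 * (x\<^sup>2 * y / sqrt (1 - y\<^sup>2) - arccos y)))
           (at 0 within {0..})"
proof -
  have "(\<lambda>k. Phi k x y) = (\<lambda>k. (x, y, if k = 0 then arccos y else t_xy k x y))"
    unfolding Phi_def by auto
  then show ?thesis
    using t_xy_has_right_derivative_0[OF assms, of x]
    unfolding has_real_derivative_iff_has_vector_derivative
    by (simp only:) (intro has_vector_derivative_Pair has_vector_derivative_const)
qed

lemma hprod_nu_eq_wJ:
  assumes "0 < y" "y < 1"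
  shows "hprod y (0, 0, 1/4 * (x\<^sup>2 * y / sqrt (1 - y\<^sup>2) - arccos y)) (nu y) = wJ x y"
proof -
  have "0 < sqrt (1 - y\<^sup>2)" using assms by (simp add: abs_square_less_1)
  then show ?thesis unfolding hprod_def nu_def wJ_def using assms by (simp add: field_simps)
qed

section \<open>The Jacobi field\<close>

lemma wF_eq_wJ_cos:
  assumes "- (pi / 2) < t" "t < pi / 2"
  shows "wF a t = wJ a (cos t)"
proof -
  have "sqrt (1 - (cos t)\<^sup>2) * arccos (cos t) = \<bar>sin t\<bar> * \<bar>t\<bar>"
    using assms by (simp add: sin_squared_eq[symmetric] arccos_cos_abs)
  also have "\<dots> = t * sin t"
    using mult_sin_nonneg[of t] assms by (simp add: abs_mult[symmetric] mult.commute)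
  finally show ?thesis unfolding wF_def wJ_def by simp
qed

lemma wS_eq_wJ_sin:
  assumes "0 < t" "t < pi"
  shows "wS a t = wJ a (sin t)"
proof -
  have "sin t = cos (pi / 2 - t)" by (simp add: cos_sin_eq)
  then have "arccos (sin t) = \<bar>pi / 2 - t\<bar>"
    using assms by (simp add: arccos_cos_abs)
  then have "sqrt (1 - (sin t)\<^sup>2) * arccos (sin t) = \<bar>cos t\<bar> * \<bar>pi / 2 - t\<bar>"
    by (simp add: cos_squared_eq[symmetric])
  also have "\<dots> = (pi / 2 - t) * cos t"
    using mult_sin_nonneg[of "pi / 2 - t"] assms
    by (simp add: abs_mult[symmetric] mult.commute sin_cos_eq)
  finally show ?thesis unfolding wS_def wJ_def by (simp add: algebra_simps)
qed

lemma wF_Jacobi_equation: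
  "deriv (\<lambda>a'. deriv (\<lambda>a''. wF a'' t) a') a
     + deriv (\<lambda>t'. deriv (\<lambda>t''. wF a t'') t') t + wF a t = 0"
proof -
  have d_a: "deriv (\<lambda>a''. wF a'' t) = (\<lambda>a'. - (a' * cos t) / 2)"
    unfolding wF_def by (intro ext DERIV_imp_deriv) (auto intro!: derivative_eq_intros)
  have d_aa: "deriv (\<lambda>a'. - (a' * cos t) / 2) a = - cos t / 2"
    by (intro DERIV_imp_deriv) (auto intro!: derivative_eq_intros)
  have d_t: "deriv (\<lambda>t''. wF a t'') = (\<lambda>t'. (1/4) * (sin t' + t' * cos t' + a\<^sup>2 * sin t'))"
    unfolding wF_def by (intro ext DERIV_imp_deriv) (auto intro!: derivative_eq_intros simp: algebra_simps)
  have d_tt: "deriv (\<lambda>t'. (1/4) * (sin t' + t' * cos t' + a\<^sup>2 * sin t')) t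
      = (1/4) * (2 * cos t - t * sin t + a\<^sup>2 * cos t)"
    by (intro DERIV_imp_deriv) (auto intro!: derivative_eq_intros simp: field_simps)
  show ?thesis
    unfolding d_a d_aa d_t d_tt by (simp add: wF_def algebra_simps)
qed

lemma wS_Jacobi_equation:
  "deriv (\<lambda>a'. deriv (\<lambda>a''. wS a'' t) a') a
     + deriv (\<lambda>t'. deriv (\<lambda>t''. wS a t'') t') t + wS a t = 0"
proof -
  have d_a: "deriv (\<lambda>a''. wS a'' t) = (\<lambda>a'. - (a' * sin t) / 2)"
    unfolding wS_def by (intro ext DERIV_imp_deriv) (auto intro!: derivative_eq_intros)
  have d_aa: "deriv (\<lambda>a'. - (a' * sin t) / 2) a = - sin t / 2"
    by (intro DERIV_imp_deriv) (auto intro!: derivative_eq_intros)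
  have d_t: "deriv (\<lambda>t''. wS a t'')
      = (\<lambda>t'. (1/8) * (- 2 * cos t' - (pi - 2 * t') * sin t' - 2 * a\<^sup>2 * cos t'))"
    unfolding wS_def by (intro ext DERIV_imp_deriv) (auto intro!: derivative_eq_intros simp: field_simps)
  have d_tt: "deriv (\<lambda>t'. (1/8) * (- 2 * cos t' - (pi - 2 * t') * sin t' - 2 * a\<^sup>2 * cos t')) t
      = (1/8) * (4 * sin t - (pi - 2 * t) * cos t + 2 * a\<^sup>2 * sin t)"
    by (intro DERIV_imp_deriv) (auto intro!: derivative_eq_intros simp: field_simps)
  show ?thesis
    unfolding d_a d_aa d_t d_tt by (simp add: wS_def algebra_simps)
qed

theorem mainTheorem8:
  fixes x y :: real
  assumes "0 < y" and "y < 1"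
  shows
    "(\<forall>\<^sub>F k in at_right 0.
        r0 k \<le> cmod (ginv (complex_of_real (mu0 k) * Complex x y)) \<and>
        cmod (ginv (complex_of_real (mu0 k) * Complex x y)) < 1)
     \<and> (\<lambda>k. t_xy k x y - (arccos y + k / 4 * (x\<^sup>2 * y / sqrt (1 - y\<^sup>2) - arccos y)))
          \<in> o[at_right 0](\<lambda>k. k)
     \<and> ((\<lambda>k. Phi k x y) \<longlongrightarrow> Phi 0 x y) (at_right 0)
     \<and> (\<exists>V. ((\<lambda>k. Phi k x y) has_vector_derivative V) (at 0 within {0..})
            \<and> hprod y V (nu y) = wJ x y)
     \<and> (\<forall>a t. - (pi/2) < t \<and> t < pi/2 \<longrightarrow>
            wF a t = wJ a (cos t)
            \<and> deriv (\<lambda>a'. deriv (\<lambda>a''. wF a'' t) a') a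
              + deriv (\<lambda>t'. deriv (\<lambda>t''. wF a t'') t') t + wF a t = 0)
     \<and> (\<forall>a t. 0 < t \<and> t < pi \<longrightarrow>
            wS a t = wJ a (sin t)
            \<and> deriv (\<lambda>a'. deriv (\<lambda>a''. wS a'' t) a') a
              + deriv (\<lambda>t'. deriv (\<lambda>t''. wS a t'') t') t + wS a t = 0)"
proof -
  note Phi_deriv = Phi_has_vector_derivative_0[OF assms, of x]
  have "((\<lambda>k. Phi k x y) \<longlongrightarrow> Phi 0 x y) (at_right 0)"
    using has_vector_derivative_continuous[OF Phi_deriv]
    unfolding continuous_within at_within_Ici_at_right .
  then show ?thesis
    using eventually_norm_ginv_mu0_bounds[OF assms] t_xy_expansion[OF assms]
      Phi_deriv hprod_nu_eq_wJ[OF assms]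
      wF_eq_wJ_cos wF_Jacobi_equation wS_eq_wJ_sin wS_Jacobi_equation
    by blast
qed

end
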